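(* Let $X$ be a real Hilbert space and let $A,B$ be closed convex nonempty subsets of $X$ such that the sets $E$ and $F$ (defined in the context) are nonempty. Consider the following conditions: (i) the couple $(A,B)$ is regular; (ii) the couple $(A,B)$ is boundedly regular; (iii) the couple $(A,B)$ is linearly regular for points bounded away from $E$. Then (iii) $\Leftrightarrow$ (i) $\Rightarrow$ (ii). Moreover, if $E$ is bounded, then (ii) $\Rightarrow$ (i).
   Context: For nonempty sets $S,T\subset X$: $\mathrm{dist}(x,S)=\inf_{s\in S}\|x-s\|$ and $\mathrm{dist}(S,T)=\inf_{s\in S}\mathrm{dist}(s,T)$. Define $E=\{a\in A:\ \mathrm{dist}(a,B)=\mathrm{dist}(A,B)\}$, $F=\{b\in B:\ \mathrm{dist}(b,A)=\mathrm{dist}(A,B)\}$, and let $v=P_{\overline{B-A}}(0)$ (the metric projection of $0$ onto the closure of $B-A=\{b-a: b\in B, a\in A\}$), called the displacement vector. The couple $(A,B)$ (with $E,F$ nonempty) is called: (1) regular if for each $\epsilon>0$ there is $\delta>0$ such that $\mathrm{dist}(x,E)\le\epsilon$ whenever $x\in X$ satisfies $\max\{\mathrm{dist}(x,A),\mathrm{dist}(x,B-v)\}\le\delta$; (2) boundedly regular if for each bounded set $S\subset X$ and each $\epsilon>0$ there is $\delta>0$ such that $\mathrm{dist}(x,E)\le\epsilon$ whenever $x\in S$ satisfies $\max\{\mathrm{dist}(x,A),\mathrm{dist}(x,B-v)\}\le\delta$; (3) linearly regular for points bounded away from $E$ if for each $\epsilon>0$ there is $K>0$ such that $\mathrm{dist}(x,E)\le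 K\max\{\mathrm{dist}(x,A),\mathrm{dist}(x,B-v)\}$ whenever $x\in X$ satisfies $\mathrm{dist}(x,E)\ge\epsilon$. *)

theory Defs
  imports "HOL-Analysis.Analysis"
begin

definition nearE :: "'a::real_normed_vector set \<Rightarrow> 'a set \<Rightarrow> 'a set" where
  "nearE A B = {a \<in> A. infdist a B = setdist A B}"

definition nearF :: "'a::real_normed_vector set \<Rightarrow> 'a set \<Rightarrow> 'a set" where
  "nearF A B = {b \<in> B. infdist b A = setdist A B}"

definition diffset :: "'a::real_normed_vector set \<Rightarrow> 'a set \<Rightarrow> 'a set" where
  "diffset B A = {b - a | b a. b \<in> B \<and> a \<in> A}"

(* metric projection of 0 onto closure (B - A): the (unique) element of minimal norm *)
definition displacement :: "'a::real_normed_vector set \<Rightarrow> 'a set \<Rightarrow> 'a" where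
  "displacement A B =
     (THE v. v \<in> closure (diffset B A) \<and> (\<forall>w \<in> closure (diffset B A). norm v \<le> norm w))"

definition regular_couple :: "'a::real_normed_vector set \<Rightarrow> 'a set \<Rightarrow> bool" where
  "regular_couple A B \<longleftrightarrow>
     (\<forall>\<epsilon>>0. \<exists>\<delta>>0. \<forall>x.
        max (infdist x A) (infdist x ((\<lambda>b. b - displacement A B) ` B)) \<le> \<delta>
        \<longrightarrow> infdist x (nearE A B) \<le> \<epsilon>)"

definition boundedly_regular_couple :: "'a::real_normed_vector set \<Rightarrow> 'a set \<Rightarrow> bool" where
  "boundedly_regular_couple A B \<longleftrightarrow>
     (\<forall>S. bounded S \<longrightarrow> (\<forall>\<epsilon>>0. \<exists>\<delta>>0. \<forall>x\<in>S.
        max (infdist x A) (infdist x ((\<lambda>b. b - displacement A B) ` B)) \<le> \<delta>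
        \<longrightarrow> infdist x (nearE A B) \<le> \<epsilon>))"

definition linearly_regular_away_couple :: "'a::real_normed_vector set \<Rightarrow> 'a set \<Rightarrow> bool" where
  "linearly_regular_away_couple A B \<longleftrightarrow>
     (\<forall>\<epsilon>>0. \<exists>K>0. \<forall>x.
        infdist x (nearE A B) \<ge> \<epsilon> \<longrightarrow>
        infdist x (nearE A B) \<le> K * max (infdist x A) (infdist x ((\<lambda>b. b - displacement A B) ` B)))"

end

theory Submission
  imports Defs
begin

(* Write v for the displacement vector and f x = max (dist(x,A)) (dist(x,B - v)).  In a Hilbert
   space the minimality of v forces a + v into B for every a in E, so E lies in A and in B - v;
   by convexity f then shrinks linearly along segments towards E: f (e + t (x - e)) <= t f x.
   Pulling a point x with dist(x,E) >= eps towards an almost nearest point of E by the factor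
   eps / dist(x,E) gives a point at distance between eps/2 and 2 eps from E whose residual is at
   most eps / dist(x,E) times f x.  Applied to the qualitative bound of regularity this yields the
   linear bound away from E; when E is bounded (and eps <= 1) all rescaled points lie in one
   bounded set, so bounded regularity suffices. *)

definition radially_subhomogeneous :: "'a::real_vector set \<Rightarrow> ('a \<Rightarrow> real) \<Rightarrow> bool" where
  "radially_subhomogeneous E f \<longleftrightarrow>
     (\<forall>e\<in>E. \<forall>x t. 0 \<le> t \<longrightarrow> t \<le> 1 \<longrightarrow> f (e + t *\<^sub>R (x - e)) \<le> t * f x)"

definition regular_residual :: "'a::real_normed_vector set \<Rightarrow> ('a \<Rightarrow> real) \<Rightarrow> bool" where
  "regular_residual E f \<longleftrightarrow> (\<forall>\<epsilon>>0. \<exists>\<delta>>0. \<forall>x. f x \<le> \<delta> \<longrightarrow> infdist x E \<le> \<epsilon>)"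

definition boundedly_regular_residual :: "'a::real_normed_vector set \<Rightarrow> ('a \<Rightarrow> real) \<Rightarrow> bool" where
  "boundedly_regular_residual E f \<longleftrightarrow>
     (\<forall>S. bounded S \<longrightarrow> (\<forall>\<epsilon>>0. \<exists>\<delta>>0. \<forall>x\<in>S. f x \<le> \<delta> \<longrightarrow> infdist x E \<le> \<epsilon>))"

definition linearly_regular_away_residual :: "'a::real_normed_vector set \<Rightarrow> ('a \<Rightarrow> real) \<Rightarrow> bool" where
  "linearly_regular_away_residual E f \<longleftrightarrow>
     (\<forall>\<epsilon>>0. \<exists>K>0. \<forall>x. infdist x E \<ge> \<epsilon> \<longrightarrow> infdist x E \<le> K * f x)"

lemma le_infdistI:
  assumes "A \<noteq> {}" "\<And>a. a \<in> A \<Longrightarrow> d \<le> dist x a"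
  shows "d \<le> infdist x A"
  using assms by (simp add: infdist_notempty cINF_greatest)

lemma infdist_less_obtain:
  assumes "A \<noteq> {}" "infdist x A < r"
  obtains a where "a \<in> A" "dist x a < r"
  using assms by (auto simp: infdist_notempty cINF_less_iff)

lemma radially_subhomogeneous_infdist:
  fixes C :: "'a::real_normed_vector set"
  assumes "convex C" "E \<subseteq> C"
  shows "radially_subhomogeneous E (\<lambda>x. infdist x C)"
  unfolding radially_subhomogeneous_def
proof (intro ballI allI impI)
  fix e x and t :: real
  assume "e \<in> E" "0 \<le> t" "t \<le> 1"
  show "infdist (e + t *\<^sub>R (x - e)) C \<le> t * infdist x C"
  proof (cases "t = 0")
    case True
    then show ?thesis using \<open>e \<in> E\<close> assms(2) by auto
  next
    case False
    then have "0 < t" using \<open>0 \<le> t\<close> by simp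
    have "infdist (e + t *\<^sub>R (x - e)) C / t \<le> dist x c" if "c \<in> C" for c
    proof -
      have "e + t *\<^sub>R (c - e) = (1 - t) *\<^sub>R e + t *\<^sub>R c" by (simp add: algebra_simps)
      also have "\<dots> \<in> C"
        using convexD[OF assms(1)] \<open>e \<in> E\<close> assms(2) that \<open>0 \<le> t\<close> \<open>t \<le> 1\<close> by auto
      finally have "infdist (e + t *\<^sub>R (x - e)) C \<le> dist (e + t *\<^sub>R (x - e)) (e + t *\<^sub>R (c - e))"
        by (rule infdist_le)
      also have "\<dots> = t * dist x c"
        using \<open>0 \<le> t\<close> by (simp add: dist_norm flip: scaleR_diff_right)
      finally show ?thesis using \<open>0 < t\<close> by (simp add: divide_le_eq mult.commute)
    qed
    then have "infdist (e + t *\<^sub>R (x - e)) C / t \<le> infdist x C"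
      using \<open>e \<in> E\<close> assms(2) by (intro le_infdistI) auto
    then show ?thesis using \<open>0 < t\<close> by (simp add: divide_le_eq mult.commute)
  qed
qed

lemma radially_subhomogeneous_max:
  assumes "radially_subhomogeneous E f" "radially_subhomogeneous E g"
  shows "radially_subhomogeneous E (\<lambda>x. max (f x) (g x))"
  using assms unfolding radially_subhomogeneous_def
  by (simp add: max_mult_distrib_left max.coboundedI1 max.coboundedI2)

lemma infdist_segment_ge:
  fixes E :: "'a::real_normed_vector set"
  assumes "dist x e \<le> infdist x E + \<eta>" "t \<le> 1"
  shows "t * infdist x E - (1 - t) * \<eta> \<le> infdist (e + t *\<^sub>R (x - e)) E"
proof -
  have "x - (e + t *\<^sub>R (x - e)) = (1 - t) *\<^sub>R (x - e)"
    by (simp add: algebra_simps)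
  then have "dist x (e + t *\<^sub>R (x - e)) = (1 - t) * dist x e"
    using assms(2) by (simp add: dist_norm)
  then have "infdist x E \<le> infdist (e + t *\<^sub>R (x - e)) E + (1 - t) * dist x e"
    using infdist_triangle by metis
  moreover have "(1 - t) * dist x e \<le> (1 - t) * (infdist x E + \<eta>)"
    using assms by (intro mult_left_mono) auto
  moreover have "(1 - t) * (infdist x E + \<eta>) = infdist x E - t * infdist x E + (1 - t) * \<eta>"
    by (simp add: algebra_simps)
  ultimately show ?thesis by linarith
qed

lemma radially_subhomogeneous_rescale:
  fixes E :: "'a::real_normed_vector set"
  assumes "radially_subhomogeneous E f" "E \<noteq> {}" "0 < \<epsilon>" "\<epsilon> \<le> infdist x E"
  obtains y e where "e \<in> E" "dist y e \<le> 2 * \<epsilon>" "\<epsilon> / 2 \<le> infdist y E"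
    "infdist x E * f y \<le> \<epsilon> * f x"
proof -
  define D where "D = infdist x E"
  have "0 < D" using assms(3,4) by (simp add: D_def)
  have "infdist x E < D + \<epsilon> / 2" using assms(3) by (simp add: D_def)
  then obtain e where e: "e \<in> E" "dist x e < D + \<epsilon> / 2"
    using infdist_less_obtain[OF assms(2)] by blast
  define t where "t = \<epsilon> / D"
  have t: "0 < t" "t \<le> 1" "t * D = \<epsilon>"
    using \<open>0 < D\<close> assms(3,4) by (simp_all add: t_def D_def)
  define y where "y = e + t *\<^sub>R (x - e)"
  have "dist y e = t * dist x e"
    using t by (simp add: y_def dist_norm)
  also have "\<dots> \<le> t * (D + \<epsilon> / 2)"
    using e(2) t by simp
  also have "\<dots> \<le> 2 * \<epsilon>"
    using t assms(3) by (simp add: distrib_left mult_left_le_one_le)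
  finally have "dist y e \<le> 2 * \<epsilon>" .
  moreover have "\<epsilon> / 2 \<le> infdist y E"
  proof -
    have "t * D - (1 - t) * (\<epsilon> / 2) \<le> infdist y E"
      unfolding y_def D_def using e(2) t(2) by (intro infdist_segment_ge) (simp_all add: D_def)
    moreover have "(1 - t) * (\<epsilon> / 2) \<le> \<epsilon> / 2"
      using t assms(3) by (simp add: mult_left_le_one_le)
    ultimately show ?thesis using t(3) by linarith
  qed
  moreover have "D * f y \<le> \<epsilon> * f x"
  proof -
    have "f y \<le> t * f x"
      using assms(1) e(1) t unfolding radially_subhomogeneous_def y_def by simp
    then have "D * f y \<le> D * (t * f x)"
      using \<open>0 < D\<close> by simp
    then show ?thesis using t(3) by (metis mult.assoc mult.commute)
  qed
  ultimately show ?thesis using that e(1) unfolding D_def by blast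
qed

lemma linearly_regular_away_imp_regular_residual:
  assumes "linearly_regular_away_residual E f"
  shows "regular_residual E f"
  unfolding regular_residual_def
proof (intro allI impI)
  fix \<epsilon> :: real
  assume "0 < \<epsilon>"
  then obtain K where "0 < K" and K: "\<And>x. \<epsilon> \<le> infdist x E \<Longrightarrow> infdist x E \<le> K * f x"
    using assms unfolding linearly_regular_away_residual_def by blast
  have "infdist x E \<le> \<epsilon>" if "f x \<le> \<epsilon> / K" for x
  proof (rule ccontr)
    assume "\<not> infdist x E \<le> \<epsilon>"
    then have "infdist x E \<le> K * f x" using K by simp
    also have "\<dots> \<le> \<epsilon>" using that \<open>0 < K\<close> by (simp add: le_divide_eq mult.commute)
    finally show False using \<open>\<not> infdist x E \<le> \<epsilon>\<close> by simp
  qed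
  then show "\<exists>\<delta>>0. \<forall>x. f x \<le> \<delta> \<longrightarrow> infdist x E \<le> \<epsilon>"
    using \<open>0 < \<epsilon>\<close> \<open>0 < K\<close> by (intro exI[of _ "\<epsilon> / K"]) auto
qed

lemma regular_imp_linearly_regular_away_residual:
  assumes "radially_subhomogeneous E f" "E \<noteq> {}" "regular_residual E f"
  shows "linearly_regular_away_residual E f"
  unfolding linearly_regular_away_residual_def
proof (intro allI impI)
  fix \<epsilon> :: real
  assume "0 < \<epsilon>"
  then have "0 < \<epsilon> / 4" by simp
  then obtain \<delta> where "0 < \<delta>" and \<delta>: "\<And>y. f y \<le> \<delta> \<Longrightarrow> infdist y E \<le> \<epsilon> / 4"
    using assms(3) unfolding regular_residual_def by blast
  have "infdist x E \<le> \<epsilon> / \<delta> * f x" if far: "\<epsilon> \<le> infdist x E" for x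
  proof -
    obtain y e where y: "\<epsilon> / 2 \<le> infdist y E" "infdist x E * f y \<le> \<epsilon> * f x"
      using radially_subhomogeneous_rescale[OF assms(1,2) \<open>0 < \<epsilon>\<close> far] by metis
    have "\<delta> < f y" using \<delta>[of y] y(1) \<open>0 < \<epsilon>\<close> by linarith
    then have "infdist x E * \<delta> \<le> \<epsilon> * f x"
      using y(2) infdist_nonneg[of x E] by (meson less_imp_le mult_left_mono order_trans)
    then show ?thesis using \<open>0 < \<delta>\<close> by (simp add: le_divide_eq mult.commute)
  qed
  then show "\<exists>K>0. \<forall>x. \<epsilon> \<le> infdist x E \<longrightarrow> infdist x E \<le> K * f x"
    using \<open>0 < \<epsilon>\<close> \<open>0 < \<delta>\<close> by (intro exI[of _ "\<epsilon> / \<delta>"]) auto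
qed

lemma boundedly_regular_imp_regular_residual:
  fixes E :: "'a::real_normed_vector set"
  assumes "radially_subhomogeneous E f" "\<And>x. 0 \<le> f x" "E \<noteq> {}" "bounded E"
    and "boundedly_regular_residual E f"
  shows "regular_residual E f"
  unfolding regular_residual_def
proof (intro allI impI)
  fix \<epsilon> :: real
  assume "0 < \<epsilon>"
  \<comment> \<open>capping \<open>\<epsilon>\<close> at 1 keeps all rescaled points in one bounded set\<close>
  define \<epsilon>' where "\<epsilon>' = min \<epsilon> 1"
  have \<epsilon>': "0 < \<epsilon>'" "\<epsilon>' \<le> \<epsilon>" "\<epsilon>' \<le> 1" using \<open>0 < \<epsilon>\<close> by (auto simp: \<epsilon>'_def)
  obtain R where R: "\<And>e. e \<in> E \<Longrightarrow> norm e \<le> R" using assms(4) unfolding bounded_iff by blast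
  have "0 < \<epsilon>' / 4" using \<epsilon>'(1) by simp
  with assms(5) obtain \<delta> where "0 < \<delta>"
    and \<delta>: "\<And>y. y \<in> cball 0 (R + 2) \<Longrightarrow> f y \<le> \<delta> \<Longrightarrow> infdist y E \<le> \<epsilon>' / 4"
    unfolding boundedly_regular_residual_def by (meson bounded_cball)
  have "infdist x E \<le> \<epsilon>" if small: "f x \<le> \<delta>" for x
  proof (rule ccontr)
    assume "\<not> infdist x E \<le> \<epsilon>"
    then have far: "\<epsilon>' \<le> infdist x E" using \<epsilon>' by simp
    obtain y e where y: "e \<in> E" "dist y e \<le> 2 * \<epsilon>'" "\<epsilon>' / 2 \<le> infdist y E"
      "infdist x E * f y \<le> \<epsilon>' * f x"
      using radially_subhomogeneous_rescale[OF assms(1,3) \<epsilon>'(1) far] by metis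
    have "\<epsilon>' * f x \<le> infdist x E * f x"
      using far assms(2) by (rule mult_right_mono)
    with y(4) have "infdist x E * f y \<le> infdist x E * f x" by linarith
    then have "f y \<le> f x"
      using far \<epsilon>'(1) by (simp add: mult_le_cancel_left_pos)
    then have "f y \<le> \<delta>" using small by linarith
    moreover have "norm y \<le> norm e + dist y e"
      by (metis dist_norm norm_triangle_sub)
    then have "y \<in> cball 0 (R + 2)"
      using R[OF y(1)] y(2) \<epsilon>'(3) by simp
    ultimately have "infdist y E \<le> \<epsilon>' / 4" using \<delta> by blast
    then show False using y(3) \<epsilon>'(1) by linarith
  qed
  then show "\<exists>\<delta>>0. \<forall>x. f x \<le> \<delta> \<longrightarrow> infdist x E \<le> \<epsilon>"
    using \<open>0 < \<delta>\<close> by blast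
qed

lemma convex_norm_diff_power2_le:
  fixes C :: "'a::real_inner set"
  assumes "convex C" "\<And>z. z \<in> C \<Longrightarrow> d \<le> norm z" "0 \<le> d" "u \<in> C" "w \<in> C"
  shows "(norm (u - w))\<^sup>2 \<le> 2 * (norm u)\<^sup>2 + 2 * (norm w)\<^sup>2 - 4 * d\<^sup>2"
proof -
  have "(1/2) *\<^sub>R u + (1/2) *\<^sub>R w \<in> C"
    by (rule convexD[OF assms(1,4,5)]) auto
  then have "2 * d \<le> norm (u + w)"
    using assms(2) by (fastforce simp flip: scaleR_add_right)
  then have "(2 * d)\<^sup>2 \<le> (norm (u + w))\<^sup>2"
    using assms(3) by (intro power_mono) auto
  moreover have "(norm (u - w))\<^sup>2 + (norm (u + w))\<^sup>2 = 2 * (norm u)\<^sup>2 + 2 * (norm w)\<^sup>2"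
    by (simp add: power2_norm_eq_inner inner_diff inner_add inner_commute)
  ultimately show ?thesis by (simp add: power_mult_distrib)
qed

lemma minimizing_sequence_Cauchy:
  fixes C :: "'a::real_inner set"
  assumes "convex C" "\<And>z. z \<in> C \<Longrightarrow> d \<le> norm z" "0 \<le> d"
    and "\<And>n. u n \<in> C" "(\<lambda>n. norm (u n)) \<longlonglongrightarrow> d"
  shows "Cauchy u"
proof (rule CauchyI)
  fix e :: real
  assume "0 < e"
  have "(\<lambda>n. (norm (u n))\<^sup>2) \<longlonglongrightarrow> d\<^sup>2"
    using assms(5) by (rule tendsto_power)
  moreover have "d\<^sup>2 < d\<^sup>2 + e\<^sup>2 / 4"
    using \<open>0 < e\<close> by simp
  ultimately have "eventually (\<lambda>n. (norm (u n))\<^sup>2 < d\<^sup>2 + e\<^sup>2 / 4) sequentially"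
    by (rule order_tendstoD)
  then obtain M where M: "\<And>n. M \<le> n \<Longrightarrow> (norm (u n))\<^sup>2 < d\<^sup>2 + e\<^sup>2 / 4"
    unfolding eventually_sequentially by blast
  have "norm (u m - u n) < e" if "M \<le> m" "M \<le> n" for m n
  proof -
    have "(norm (u m - u n))\<^sup>2 \<le> 2 * (norm (u m))\<^sup>2 + 2 * (norm (u n))\<^sup>2 - 4 * d\<^sup>2"
      by (rule convex_norm_diff_power2_le[OF assms(1-3) assms(4) assms(4)])
    also have "\<dots> < e\<^sup>2"
      using M[OF that(1)] M[OF that(2)] by simp
    finally show ?thesis
      using \<open>0 < e\<close> by (simp add: power_less_imp_less_base)
  qed
  then show "\<exists>M. \<forall>m\<ge>M. \<forall>n\<ge>M. norm (u m - u n) < e"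
    by blast
qed

lemma min_norm_point_exists:
  fixes C :: "'a::{real_inner, complete_space} set"
  assumes "closed C" "convex C" "C \<noteq> {}"
  obtains v where "v \<in> C" "\<And>w. w \<in> C \<Longrightarrow> norm v \<le> norm w"
proof -
  define d where "d = Inf (norm ` C)"
  have bdd: "bdd_below (norm ` C)"
    by (rule bdd_belowI[of _ 0]) auto
  have d_le: "d \<le> norm w" if "w \<in> C" for w
    unfolding d_def using bdd that by (simp add: cInf_lower)
  have "0 \<le> d"
    unfolding d_def using assms(3) by (auto intro: cInf_greatest)
  have "d \<in> closure (norm ` C)"
    unfolding d_def using assms(3) bdd by (intro closure_contains_Inf) auto
  then obtain r where r: "\<And>n. r n \<in> norm ` C" "r \<longlonglongrightarrow> d"
    unfolding closure_sequential by blast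
  then have "\<forall>n. \<exists>w. w \<in> C \<and> norm w = r n"
    by (metis imageE)
  then obtain u where u: "\<And>n. u n \<in> C" "\<And>n. norm (u n) = r n"
    using choice[of "\<lambda>n w. w \<in> C \<and> norm w = r n"] by blast
  have "(\<lambda>n. norm (u n)) = r"
    using u(2) by auto
  then have "Cauchy u"
    using minimizing_sequence_Cauchy[OF assms(2) d_le \<open>0 \<le> d\<close> u(1)] r(2) by simp
  then obtain v where v: "u \<longlonglongrightarrow> v"
    using Cauchy_convergent_iff convergent_def by blast
  have "v \<in> C"
    using closed_sequentially[OF assms(1) u(1) v] .
  moreover have "norm v = d"
    using LIMSEQ_unique[OF tendsto_norm[OF v]] u(2) r(2) by simp
  ultimately show ?thesis
    using that d_le by metis
qed

lemma min_norm_point_unique: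
  fixes C :: "'a::real_inner set"
  assumes "convex C" "v \<in> C" "v' \<in> C"
    and "\<And>w. w \<in> C \<Longrightarrow> norm v \<le> norm w" "\<And>w. w \<in> C \<Longrightarrow> norm v' \<le> norm w"
  shows "v' = v"
proof -
  have "norm v' = norm v"
    using assms by (meson order_antisym)
  moreover have "(norm (v' - v))\<^sup>2 \<le> 2 * (norm v')\<^sup>2 + 2 * (norm v)\<^sup>2 - 4 * (norm v)\<^sup>2"
    by (rule convex_norm_diff_power2_le[OF assms(1,4) norm_ge_zero assms(3,2)])
  ultimately have "(norm (v' - v))\<^sup>2 \<le> 0"
    by simp
  then show ?thesis by simp
qed

lemma convex_diffset:
  assumes "convex A" "convex B"
  shows "convex (diffset B A)"
proof -
  have "diffset B A = (\<Union>b\<in>B. \<Union>a\<in>A. {b - a})"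
    unfolding diffset_def by auto
  then show ?thesis
    using convex_differences[OF assms(2,1)] by simp
qed

lemma displacement_min_norm:
  fixes A B :: "'a::{real_inner, complete_space} set"
  assumes "convex A" "A \<noteq> {}" "convex B" "B \<noteq> {}"
  shows "displacement A B \<in> closure (diffset B A)"
    and "\<And>w. w \<in> closure (diffset B A) \<Longrightarrow> norm (displacement A B) \<le> norm w"
proof -
  let ?C = "closure (diffset B A)"
  have "convex ?C"
    by (rule convex_closure[OF convex_diffset[OF assms(1,3)]])
  moreover have "?C \<noteq> {}"
    using assms(2,4) unfolding diffset_def by auto
  ultimately obtain v where v: "v \<in> ?C" "\<And>w. w \<in> ?C \<Longrightarrow> norm v \<le> norm w"
    using min_norm_point_exists[OF closed_closure] by blast
  have "\<exists>!v. v \<in> ?C \<and> (\<forall>w\<in>?C. norm v \<le> norm w)"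
    using v min_norm_point_unique[OF \<open>convex ?C\<close>] by (intro ex1I[of _ v]) auto
  then have "displacement A B \<in> ?C \<and> (\<forall>w\<in>?C. norm (displacement A B) \<le> norm w)"
    unfolding displacement_def by (rule theI')
  then show "displacement A B \<in> ?C" "\<And>w. w \<in> ?C \<Longrightarrow> norm (displacement A B) \<le> norm w"
    by auto
qed

lemma setdist_le_norm_closure_diffset:
  fixes A B :: "'a::real_normed_vector set"
  assumes "w \<in> closure (diffset B A)"
  shows "setdist A B \<le> norm w"
proof -
  have "setdist A B \<le> norm (b - a)" if "b \<in> B" "a \<in> A" for a b
    using setdist_le_dist[OF that(2,1)] by (simp add: dist_norm norm_minus_commute)
  then have "diffset B A \<subseteq> {w. setdist A B \<le> norm w}"
    unfolding diffset_def by blast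
  moreover have "closed {w::'a. setdist A B \<le> norm w}"
    by (intro closed_Collect_le continuous_intros)
  ultimately have "closure (diffset B A) \<subseteq> {w. setdist A B \<le> norm w}"
    by (rule closure_minimal)
  then show ?thesis
    using assms by blast
qed

lemma nearE_plus_displacement:
  fixes A B :: "'a::{real_inner, complete_space} set"
  assumes "convex A" "closed B" "convex B" "B \<noteq> {}" "a \<in> nearE A B"
  shows "a + displacement A B \<in> B"
proof -
  define v where "v = displacement A B"
  define d where "d = setdist A B"
  define s where "s = infdist (a + v) B"
  have "a \<in> A" "infdist a B = d"
    using assms(5) by (auto simp: nearE_def d_def)
  then have "A \<noteq> {}" by auto
  note v = displacement_min_norm[OF assms(1) \<open>A \<noteq> {}\<close> assms(3,4), folded v_def]
  have "0 \<le> d"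
    unfolding d_def by (rule setdist_pos_le)
  have "d \<le> norm v"
    unfolding d_def by (rule setdist_le_norm_closure_diffset[OF v(1)])
  have "sqrt (s\<^sup>2 / 2 + d\<^sup>2) \<le> dist a b" if "b \<in> B" for b
  proof -
    have "b - a \<in> diffset B A"
      unfolding diffset_def using that \<open>a \<in> A\<close> by blast
    then have ba: "b - a \<in> closure (diffset B A)"
      using closure_subset by blast
    have "(norm ((b - a) - v))\<^sup>2 \<le> 2 * (norm (b - a))\<^sup>2 + 2 * (norm v)\<^sup>2 - 4 * (norm v)\<^sup>2"
      by (rule convex_norm_diff_power2_le[OF convex_closure[OF convex_diffset[OF assms(1,3)]]
            v(2) norm_ge_zero ba v(1)])
    moreover have "dist (a + v) b = norm ((b - a) - v)"
      unfolding dist_norm by (metis minus_diff_eq norm_minus_cancel diff_diff_eq)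
    then have "s \<le> norm ((b - a) - v)"
      using infdist_le[OF that, of "a + v"] unfolding s_def by linarith
    then have "s\<^sup>2 \<le> (norm ((b - a) - v))\<^sup>2"
      by (rule power_mono) (simp add: s_def infdist_nonneg)
    moreover have "d\<^sup>2 \<le> (norm v)\<^sup>2"
      using \<open>d \<le> norm v\<close> \<open>0 \<le> d\<close> by (rule power_mono)
    ultimately have "s\<^sup>2 / 2 + d\<^sup>2 \<le> (norm (b - a))\<^sup>2"
      by linarith
    moreover have "dist a b = norm (b - a)"
      by (metis dist_commute dist_norm)
    ultimately show ?thesis
      by (simp add: real_le_lsqrt)
  qed
  then have "sqrt (s\<^sup>2 / 2 + d\<^sup>2) \<le> infdist a B"
    by (rule le_infdistI[OF assms(4)])
  then have "s\<^sup>2 / 2 + d\<^sup>2 \<le> d\<^sup>2"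
    unfolding \<open>infdist a B = d\<close> by (rule sqrt_le_D)
  then have "infdist (a + v) B = 0"
    unfolding s_def by simp
  then show ?thesis
    unfolding v_def [symmetric] in_closed_iff_infdist_zero[OF assms(2,4)] .
qed

lemma radially_subhomogeneous_couple:
  fixes A B :: "'a::{real_inner, complete_space} set"
  assumes "convex A" "closed B" "convex B" "B \<noteq> {}"
  shows "radially_subhomogeneous (nearE A B)
    (\<lambda>x. max (infdist x A) (infdist x ((\<lambda>b. b - displacement A B) ` B)))"
proof (intro radially_subhomogeneous_max radially_subhomogeneous_infdist)
  show "nearE A B \<subseteq> (\<lambda>b. b - displacement A B) ` B"
  proof
    fix a assume "a \<in> nearE A B"
    then have "a + displacement A B \<in> B" by (rule nearE_plus_displacement[OF assms])
    then show "a \<in> (\<lambda>b. b - displacement A B) ` B" by (rule rev_image_eqI) simp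
  qed
qed (use assms in \<open>auto simp: nearE_def\<close>)

theorem proposition3p2:
  fixes A B :: "'a::{real_inner, complete_space} set"
  assumes "closed A" "convex A" "A \<noteq> {}"
    and "closed B" "convex B" "B \<noteq> {}"
    and "nearE A B \<noteq> {}" "nearF A B \<noteq> {}"
  shows "(linearly_regular_away_couple A B \<longleftrightarrow> regular_couple A B)
       \<and> (regular_couple A B \<longrightarrow> boundedly_regular_couple A B)
       \<and> (bounded (nearE A B) \<longrightarrow> boundedly_regular_couple A B \<longrightarrow> regular_couple A B)"
proof -
  define E where "E = nearE A B"
  define f where "f x = max (infdist x A) (infdist x ((\<lambda>b. b - displacement A B) ` B))" for x
  have regularity_iff:
    "regular_couple A B \<longleftrightarrow> regular_residual E f"
    "boundedly_regular_couple A B \<longleftrightarrow> boundedly_regular_residual E f"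
    "linearly_regular_away_couple A B \<longleftrightarrow> linearly_regular_away_residual E f"
    unfolding regular_couple_def regular_residual_def boundedly_regular_couple_def
      boundedly_regular_residual_def linearly_regular_away_couple_def
      linearly_regular_away_residual_def E_def f_def by (rule refl)+
  have "E \<noteq> {}"
    using assms(7) by (simp add: E_def)
  have subhom: "radially_subhomogeneous E f"
    unfolding E_def f_def by (rule radially_subhomogeneous_couple[OF assms(2,4,5,6)])
  have nonneg: "0 \<le> f x" for x
    by (simp add: f_def infdist_nonneg le_max_iff_disj)
  have "regular_residual E f \<Longrightarrow> boundedly_regular_residual E f"
    unfolding regular_residual_def boundedly_regular_residual_def by blast
  then show ?thesis
    unfolding regularity_iff E_def [symmetric]
    using linearly_regular_away_imp_regular_residual[of E f]
      regular_imp_linearly_regular_away_residual[OF subhom \<open>E \<noteq> {}\<close>]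
      boundedly_regular_imp_regular_residual[OF subhom nonneg \<open>E \<noteq> {}\<close>]
    by blast
qed

end
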